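(* Let $X$ be a locally compact space, $Y$ a space, and $F\colon\mathcal{K}(X)\to\mathcal{K}(Y)$ a map satisfying: (1) if $K,L\in\mathcal{K}(X)$ and $K\subset L$, then $F(K)\subset F(L)$; $(3')$ for each open cover $\mathcal{W}$ of $X$ and each $y\in Y$ there exist a finite subfamily $\mathcal{E}\subset\mathcal{W}$ and a neighborhood $V_y$ of $y$ such that every compact $L\subset V_y$ satisfies $L\subset F(K)$ for some compact $K\subset\bigcup\mathcal{E}$. Then $Y$ is locally compact.
   Context: All spaces are completely regular. $\mathcal{K}(X)$ denotes the set of all compact subsets of $X$. *)

theory Defs
  imports "HOL-Analysis.Analysis"
begin

end

theory Submission
  imports Defs
begin

text \<open>Cover \<open>X\<close> by the open sets that lie inside some compact set. For a point \<open>y\<close>, condition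
  (3') yields finitely many of them, whose union lies in a single compact \<open>C\<close>, and a neighbourhood
  \<open>V\<close> of \<open>y\<close>. Every point of \<open>V\<close> is a compact singleton, hence lies in some \<open>F K\<close> with
  \<open>K \<subseteq> C\<close>, so by monotonicity the open neighbourhood of \<open>y\<close> inside \<open>V\<close> lies in the compact set
  \<open>F C\<close>.\<close>

lemma locally_compact_space_Union_relatively_compact_opens:
  assumes "locally_compact_space X"
  shows "\<Union>{U. openin X U \<and> (\<exists>K. compactin X K \<and> U \<subseteq> K)} = topspace X"
proof
  show "topspace X \<subseteq> \<Union>{U. openin X U \<and> (\<exists>K. compactin X K \<and> U \<subseteq> K)}"
    using assms unfolding locally_compact_space_def by blast
qed (auto dest: openin_subset)

lemma compactin_superset_finite_Union:
  assumes "finite \<E>" and "\<And>E. E \<in> \<E> \<Longrightarrow> \<exists>K. compactin X K \<and> E \<subseteq> K"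
  obtains C where "compactin X C" and "\<Union>\<E> \<subseteq> C"
proof -
  have "\<forall>E\<in>\<E>. \<exists>K. compactin X K \<and> E \<subseteq> K"
    using assms(2) by blast
  then obtain k where k: "\<And>E. E \<in> \<E> \<Longrightarrow> compactin X (k E) \<and> E \<subseteq> k E"
    by metis
  show thesis
  proof (rule that)
    show "compactin X (\<Union>(k ` \<E>))"
      using assms(1) k by (intro compactin_Union) auto
    show "\<Union>\<E> \<subseteq> \<Union>(k ` \<E>)"
      using k by blast
  qed
qed

lemma points_subset_image_of_compact_bound:
  assumes F_mono: "\<And>K L. compactin X K \<Longrightarrow> compactin X L \<Longrightarrow> K \<subseteq> L \<Longrightarrow> F K \<subseteq> F L"
    and C: "compactin X C" "S \<subseteq> C"
    and V: "V \<subseteq> topspace Y"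
    and hit: "\<And>L. compactin Y L \<Longrightarrow> L \<subseteq> V \<Longrightarrow> \<exists>K. compactin X K \<and> K \<subseteq> S \<and> L \<subseteq> F K"
  shows "V \<subseteq> F C"
proof
  fix z assume "z \<in> V"
  then have "compactin Y {z}" and "{z} \<subseteq> V"
    using V by auto
  then obtain K where K: "compactin X K" "K \<subseteq> S" and "z \<in> F K"
    using hit by blast
  moreover have "F K \<subseteq> F C"
    using F_mono[OF K(1) C(1)] K(2) C(2) by blast
  ultimately show "z \<in> F C"
    by blast
qed

theorem proposition4p2:
  fixes X :: "'a topology" and Y :: "'b topology" and F :: "'a set \<Rightarrow> 'b set"
  assumes X_tych: "completely_regular_space X" "Hausdorff_space X"
    and Y_tych: "completely_regular_space Y" "Hausdorff_space Y"
    and X_lc: "locally_compact_space X"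
    and F_maps: "\<And>K. compactin X K \<Longrightarrow> compactin Y (F K)"
    and F_mono: "\<And>K L. compactin X K \<Longrightarrow> compactin X L \<Longrightarrow> K \<subseteq> L \<Longrightarrow> F K \<subseteq> F L"
    and F_cover: "\<And>\<W> y. (\<forall>W\<in>\<W>. openin X W) \<Longrightarrow> \<Union>\<W> = topspace X \<Longrightarrow> y \<in> topspace Y \<Longrightarrow>
        \<exists>\<E> U V. finite \<E> \<and> \<E> \<subseteq> \<W> \<and> openin Y U \<and> y \<in> U \<and> U \<subseteq> V \<and> V \<subseteq> topspace Y \<and>
          (\<forall>L. compactin Y L \<and> L \<subseteq> V \<longrightarrow>
             (\<exists>K. compactin X K \<and> K \<subseteq> \<Union>\<E> \<and> L \<subseteq> F K))"
  shows "locally_compact_space Y"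
  unfolding locally_compact_space_def
proof
  fix y assume y: "y \<in> topspace Y"
  define \<W> where "\<W> = {U. openin X U \<and> (\<exists>K. compactin X K \<and> U \<subseteq> K)}"
  have \<W>_open: "\<forall>W\<in>\<W>. openin X W"
    by (simp add: \<W>_def)
  have \<W>_cover: "\<Union>\<W> = topspace X"
    unfolding \<W>_def by (rule locally_compact_space_Union_relatively_compact_opens[OF X_lc])
  from F_cover[OF \<W>_open \<W>_cover y] obtain \<E> U V where \<E>: "finite \<E>" "\<E> \<subseteq> \<W>"
    and U: "openin Y U" "y \<in> U" "U \<subseteq> V" and V: "V \<subseteq> topspace Y"
    and hit: "\<forall>L. compactin Y L \<and> L \<subseteq> V \<longrightarrow> (\<exists>K. compactin X K \<and> K \<subseteq> \<Union>\<E> \<and> L \<subseteq> F K)"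
    by (elim exE conjE) simp
  obtain C where C: "compactin X C" "\<Union>\<E> \<subseteq> C"
    using compactin_superset_finite_Union[OF \<E>(1)] \<E>(2) unfolding \<W>_def by blast
  have "V \<subseteq> F C"
    using points_subset_image_of_compact_bound[where F = F, OF F_mono C V] hit by blast
  then show "\<exists>U K. openin Y U \<and> compactin Y K \<and> y \<in> U \<and> U \<subseteq> K"
    using U F_maps[OF C(1)] by blast
qed

end
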